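(* Let $F \leq F' \leq \hat F$ and $H\leq H'\leq \hat H$ be permutation groups on $\Omega$ with $F\leq H$ and $F'\leq H'$. Suppose that $H\cap F'=F$ and $H'=HF'$. Then $G(F,F')$ is a closed cocompact subgroup of $G(H,H')$. If moreover $F$ acts freely on $\Omega$, then $G(F,F')$ is a cocompact lattice in $G(H,H')$.
   Context: Standing notation. $\Omega$ is a finite set with $d=|\Omega|\geq 3$, $\mathcal{T}_d$ is the $d$-regular tree with vertex set $V$ and set $E$ of non-oriented edges, and $\mathrm{Aut}(\mathcal{T}_d)$ carries the permutation topology. Fix a coloring $c:E\to\Omega$ such that for every vertex $v$ its restriction $c_v$ to the set $E(v)$ of edges containing $v$ is a bijection onto $\Omega$. For $g\in\mathrm{Aut}(\mathcal{T}_d)$ and $v\in V$, the local permutation is $\sigma(g,v)=c_{gv}\circ g_v\circ c_v^{-1}\in\mathrm{Sym}(\Omega)$, where $g_v:E(v)\to E(gv)$ is induced by $g$. For $F\leq\mathrm{Sym}(\Omega)$: $U(F)=\{g:\sigma(g,v)\in F \ \forall v\}$; $G(F)=\{g:\sigma(g,v)\in F \text{ for all but finitely many } v\}$; $\hat F$ is the subgroup of permutations preserving each $F$-orbit. For $F\leq F'\leq\hat F$, $G(F,F')=G(F)\cap U(F')$, endowed with the unique group topology for which the inclusion $U(F)\hookrightarrow G(F,F')$ is continuous and open ($U(F)$ with the topology induced from $\mathrm{Aut}(\mathcal{T}_d)$). *)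

theory Defs
  imports "HOL-Analysis.Analysis"
begin

text \<open>Model of the d-regular tree T_d with its legal colouring, d = CARD('a):
  vertices are reduced words over Omega (no two consecutive letters equal),
  edges join w and w@[a]; the edge {w, w@[a]} has colour a.\<close>

definition tverts :: "'a list set" where
  "tverts = {w. successively (\<noteq>) w}"

definition tadj :: "'a list \<Rightarrow> 'a list \<Rightarrow> bool" where
  "tadj u w \<longleftrightarrow> u \<in> tverts \<and> w \<in> tverts \<and> (\<exists>a. w = u @ [a] \<or> u = w @ [a])"

definition tcol :: "'a list \<Rightarrow> 'a list \<Rightarrow> 'a" where
  "tcol u w = (if length u < length w then last w else last u)"

text \<open>the neighbour of v along the edge of colour a, i.e. c_v^{-1}(a)\<close>
definition tnb :: "'a list \<Rightarrow> 'a \<Rightarrow> 'a list" where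
  "tnb v a = (if v \<noteq> [] \<and> last v = a then butlast v else v @ [a])"

definition tAut :: "('a list \<Rightarrow> 'a list) set" where
  "tAut = {g. bij g \<and> g ` tverts = tverts \<and> (\<forall>x. x \<notin> tverts \<longrightarrow> g x = x)
              \<and> (\<forall>u\<in>tverts. \<forall>w\<in>tverts. tadj (g u) (g w) \<longleftrightarrow> tadj u w)}"

text \<open>local permutation sigma(g,v) = c_{gv} o g_v o c_v^{-1}\<close>
definition sigma :: "('a list \<Rightarrow> 'a list) \<Rightarrow> 'a list \<Rightarrow> 'a \<Rightarrow> 'a" where
  "sigma g v = (\<lambda>a. tcol (g v) (g (tnb v a)))"

text \<open>permutation groups on Omega (= UNIV :: 'a set)\<close>
definition perm_group :: "('a \<Rightarrow> 'a) set \<Rightarrow> bool" where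
  "perm_group F \<longleftrightarrow> (\<forall>f\<in>F. bij f) \<and> id \<in> F \<and> (\<forall>f\<in>F. \<forall>g\<in>F. f \<circ> g \<in> F)
                     \<and> (\<forall>f\<in>F. inv f \<in> F)"

definition hat :: "('a \<Rightarrow> 'a) set \<Rightarrow> ('a \<Rightarrow> 'a) set" where
  "hat F = {p. bij p \<and> (\<forall>x. \<exists>f\<in>F. p x = f x)}"

definition acts_freely :: "('a \<Rightarrow> 'a) set \<Rightarrow> bool" where
  "acts_freely F \<longleftrightarrow> (\<forall>f\<in>F. \<forall>x. f x = x \<longrightarrow> f = id)"

definition setprod :: "('a \<Rightarrow> 'a) set \<Rightarrow> ('a \<Rightarrow> 'a) set \<Rightarrow> ('a \<Rightarrow> 'a) set" where
  "setprod H F = {h \<circ> f | h f. h \<in> H \<and> f \<in> F}"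

definition U :: "('a \<Rightarrow> 'a) set \<Rightarrow> ('a list \<Rightarrow> 'a list) set" where
  "U F = {g \<in> tAut. \<forall>v\<in>tverts. sigma g v \<in> F}"

definition G :: "('a \<Rightarrow> 'a) set \<Rightarrow> ('a list \<Rightarrow> 'a list) set" where
  "G F = {g \<in> tAut. finite {v \<in> tverts. sigma g v \<notin> F}}"

definition G2 :: "('a \<Rightarrow> 'a) set \<Rightarrow> ('a \<Rightarrow> 'a) set \<Rightarrow> ('a list \<Rightarrow> 'a list) set" where
  "G2 F F' = G F \<inter> U F'"

definition fixU :: "('a \<Rightarrow> 'a) set \<Rightarrow> 'a list set \<Rightarrow> ('a list \<Rightarrow> 'a list) set" where
  "fixU F S = {k \<in> U F. \<forall>s\<in>S. k s = s}"

text \<open>The group topology on G(F,F') for which U(F) (with the permutation topology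
  induced from Aut(T_d)) is an open subgroup: a basis of neighbourhoods of g is
  given by the cosets g * Fix_{U(F)}(S), S a finite set of vertices.\<close>
definition Gtop :: "('a \<Rightarrow> 'a) set \<Rightarrow> ('a \<Rightarrow> 'a) set \<Rightarrow> ('a list \<Rightarrow> 'a list) topology" where
  "Gtop F F' = topology (\<lambda>W. W \<subseteq> G2 F F' \<and>
      (\<forall>g\<in>W. \<exists>S. finite S \<and> S \<subseteq> tverts \<and> (\<lambda>k. g \<circ> k) ` fixU F S \<subseteq> W))"

definition is_subgroup :: "('a list \<Rightarrow> 'a list) set \<Rightarrow> ('a list \<Rightarrow> 'a list) set \<Rightarrow> bool" where
  "is_subgroup \<Gamma> Grp \<longleftrightarrow> \<Gamma> \<subseteq> Grp \<and> id \<in> \<Gamma> \<and> (\<forall>x\<in>\<Gamma>. \<forall>y\<in>\<Gamma>. x \<circ> y \<in> \<Gamma>)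
                            \<and> (\<forall>x\<in>\<Gamma>. inv x \<in> \<Gamma>)"

definition cocompact :: "('b \<Rightarrow> 'b) topology \<Rightarrow> ('b \<Rightarrow> 'b) set \<Rightarrow> bool" where
  "cocompact T \<Gamma> \<longleftrightarrow> (\<exists>K. compactin T K \<and> {k \<circ> \<gamma> | k \<gamma>. k \<in> K \<and> \<gamma> \<in> \<Gamma>} = topspace T)"

definition discrete_in :: "'b topology \<Rightarrow> 'b set \<Rightarrow> bool" where
  "discrete_in T \<Gamma> \<longleftrightarrow> subtopology T \<Gamma> = discrete_topology \<Gamma>"

definition cocompact_lattice :: "('b \<Rightarrow> 'b) topology \<Rightarrow> ('b \<Rightarrow> 'b) set \<Rightarrow> bool" where
  "cocompact_lattice T \<Gamma> \<longleftrightarrow> discrete_in T \<Gamma> \<and> cocompact T \<Gamma>"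

end

theory Submission
  imports Defs
begin

text \<open>Since \<open>H \<inter> F' = F\<close>, \<open>G(F,F')\<close> is the set of elements of \<open>G(H,H')\<close> lying in
  \<open>U(F')\<close>, a condition at each single vertex that only depends on the action on the
  star of that vertex; hence it is closed.

  For cocompactness let \<open>K\<close> be the stabiliser of the root in \<open>U(H)\<close>, a closed subset
  of a product of finite sets and hence compact. Given \<open>g \<in> G(H,H')\<close>, a colour-preserving
  automorphism in \<open>U(F)\<close> moves the root so that \<open>g\<close> may be assumed to fix it. Since
  \<open>H' = H F'\<close>, each local permutation of \<open>g\<close> factors as \<open>h\<^sub>v f\<^sub>v\<close> with
  \<open>h\<^sub>v \<in> H\<close> and \<open>f\<^sub>v \<in> F'\<close> (\<open>f\<^sub>v = 1\<close> where it already lies in \<open>H\<close>).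
  As \<open>F' \<le> F-hat\<close>, an automorphism \<open>\<gamma>\<close> whose local permutation at every \<open>v\<close>
  lies in the coset \<open>F f\<^sub>v\<close> can be built outwards from the root; it lies in
  \<open>G(F,F')\<close>, and \<open>g \<gamma>\<^sup>-\<^sup>1 \<in> K\<close>.

  If \<open>F\<close> acts freely, an element of \<open>U(F)\<close> fixing an edge is trivial, so the open
  coset of the stabiliser of an edge through \<open>\<gamma> \<in> G(F,F')\<close> meets \<open>G(F,F')\<close> only
  in \<open>\<gamma>\<close>.\<close>

section \<open>The tree and its automorphisms\<close>

lemma tverts_Nil [simp]: "[] \<in> tverts"
  by (simp add: tverts_def)

lemma tverts_snoc: "w @ [a] \<in> tverts \<longleftrightarrow> w \<in> tverts \<and> (w = [] \<or> last w \<noteq> a)"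
  by (cases w rule: rev_cases) (auto simp: tverts_def successively_append_iff)

lemma tverts_Cons: "y # w \<in> tverts \<longleftrightarrow> w \<in> tverts \<and> (w = [] \<or> hd w \<noteq> y)"
  by (cases w) (auto simp: tverts_def)

lemma tnb_in_tverts: "v \<in> tverts \<Longrightarrow> tnb v a \<in> tverts"
  by (cases v rule: rev_cases) (auto simp: tnb_def tverts_def successively_append_iff butlast_append)

lemma tnb_tnb: "v \<in> tverts \<Longrightarrow> tnb (tnb v a) a = v"
  by (cases v rule: rev_cases) (auto simp: tnb_def tverts_def successively_append_iff butlast_append)

lemma tnb_snoc: "w @ [a] \<in> tverts \<Longrightarrow> tnb w a = w @ [a]"
  by (auto simp: tnb_def tverts_snoc)

lemma tcol_tnb [simp]: "tcol v (tnb v a) = a"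
  by (cases v rule: rev_cases) (auto simp: tcol_def tnb_def)

lemma inj_tnb: "inj (tnb v)"
  by (metis injI tcol_tnb)

lemma tadj_iff_tnb: "tadj u w \<longleftrightarrow> u \<in> tverts \<and> w \<in> tverts \<and> (\<exists>a. w = tnb u a)"
proof -
  have "(\<exists>a. w = u @ [a] \<or> u = w @ [a]) \<longleftrightarrow> (\<exists>a. w = tnb u a)" if "w \<in> tverts" for u w :: "'a list"
    using that by (cases u rule: rev_cases) (auto simp: tnb_def tverts_def successively_append_iff)
  then show ?thesis
    unfolding tadj_def by blast
qed

lemma tnb_star_subset: "v \<in> tverts \<Longrightarrow> insert v (range (tnb v)) \<subseteq> tverts"
  using tnb_in_tverts by auto

lemma tAut_intro:
  assumes "inj_on g tverts" "g ` tverts = tverts" "\<And>x. x \<notin> tverts \<Longrightarrow> g x = x"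
    and "\<And>u w. u \<in> tverts \<Longrightarrow> w \<in> tverts \<Longrightarrow> tadj (g u) (g w) \<longleftrightarrow> tadj u w"
  shows "g \<in> tAut"
proof -
  have into: "g x \<in> tverts \<longleftrightarrow> x \<in> tverts" for x
    using assms(2,3) by (cases "x \<in> tverts") auto
  have "inj g"
  proof (rule injI)
    fix x y assume eq: "g x = g y"
    show "x = y"
    proof (cases "x \<in> tverts")
      case True
      then have "y \<in> tverts"
        using eq into by metis
      then show ?thesis
        using True eq assms(1) by (simp add: inj_on_eq_iff)
    next
      case False
      then have "y \<notin> tverts"
        using eq into by metis
      then show ?thesis
        using False eq assms(3) by simp
    qed
  qed
  moreover have "y \<in> range g" for y
  proof (cases "y \<in> tverts")
    case True
    then show ?thesis
      using assms(2) by blast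
  next
    case False
    then show ?thesis
      using assms(3)[OF False] by (metis rangeI)
  qed
  ultimately show ?thesis
    using assms unfolding tAut_def bij_def by blast
qed

lemma tAut_intro_tnb:
  fixes g :: "'a::finite list \<Rightarrow> 'a list"
  assumes inj: "inj_on g tverts" and onto: "g ` tverts = tverts"
    and outside: "\<And>x. x \<notin> tverts \<Longrightarrow> g x = x"
    and s_inj: "\<And>v. v \<in> tverts \<Longrightarrow> inj (s v)"
    and g_tnb: "\<And>v a. v \<in> tverts \<Longrightarrow> g (tnb v a) = tnb (g v) (s v a)"
  shows "g \<in> tAut"
proof (rule tAut_intro[OF inj onto outside])
  fix u w :: "'a list"
  assume u: "u \<in> tverts" and w: "w \<in> tverts"
  have gu: "g u \<in> tverts" and gw: "g w \<in> tverts"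
    using onto u w by blast+
  show "tadj (g u) (g w) \<longleftrightarrow> tadj u w"
  proof
    assume "tadj (g u) (g w)"
    then obtain e where e: "g w = tnb (g u) e"
      by (auto simp: tadj_iff_tnb)
    have "surj (s u)"
      using finite_UNIV_inj_surj[of "s u"] s_inj[OF u] by simp
    then obtain a where "s u a = e"
      by (metis surjD)
    then have "g w = g (tnb u a)"
      using e g_tnb[OF u] by simp
    then have "w = tnb u a"
      using inj w tnb_in_tverts[OF u] by (simp add: inj_on_eq_iff)
    then show "tadj u w"
      using u w by (auto simp: tadj_iff_tnb)
  next
    assume "tadj u w"
    then show "tadj (g u) (g w)"
      using g_tnb[OF u] gu gw by (auto simp: tadj_iff_tnb)
  qed
qed

lemma tAut_in_tverts: "g \<in> tAut \<Longrightarrow> v \<in> tverts \<Longrightarrow> g v \<in> tverts"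
  by (auto simp: tAut_def)

lemma tAut_outside: "g \<in> tAut \<Longrightarrow> v \<notin> tverts \<Longrightarrow> g v = v"
  by (simp add: tAut_def)

lemma tAut_bij: "g \<in> tAut \<Longrightarrow> bij g"
  by (simp add: tAut_def)

lemma tAut_tadj: "g \<in> tAut \<Longrightarrow> u \<in> tverts \<Longrightarrow> w \<in> tverts \<Longrightarrow> tadj (g u) (g w) \<longleftrightarrow> tadj u w"
  by (simp add: tAut_def)

lemma tAut_apply_inv [simp]: "g \<in> tAut \<Longrightarrow> g (inv g x) = x"
  using tAut_bij bij_inv_eq_iff by metis

lemma tAut_inv_apply [simp]: "g \<in> tAut \<Longrightarrow> inv g (g x) = x"
  using tAut_bij bij_inv_eq_iff by metis

lemma tAut_comp_inv [simp]: "g \<in> tAut \<Longrightarrow> g \<circ> inv g = id"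
  by auto

lemma tAut_inv_comp [simp]: "g \<in> tAut \<Longrightarrow> inv g \<circ> g = id"
  by auto

lemma id_in_tAut: "id \<in> tAut"
  unfolding tAut_def by auto

lemma tAut_comp: assumes g: "g \<in> tAut" and k: "k \<in> tAut" shows "g \<circ> k \<in> tAut"
proof (rule tAut_intro)
  show "inj_on (g \<circ> k) tverts"
    using tAut_bij[OF g] tAut_bij[OF k] by (meson bij_comp bij_def inj_on_subset subset_UNIV)
  show "(g \<circ> k) ` tverts = tverts"
  proof -
    have "(g \<circ> k) ` tverts = g ` (k ` tverts)"
      by (simp only: image_comp)
    then show ?thesis
      using g k by (simp add: tAut_def)
  qed
  show "(g \<circ> k) x = x" if "x \<notin> tverts" for x
    using that g k by (simp add: tAut_outside)
  show "tadj ((g \<circ> k) u) ((g \<circ> k) w) \<longleftrightarrow> tadj u w" if "u \<in> tverts" "w \<in> tverts" for u w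
    using that g k by (simp add: tAut_tadj tAut_in_tverts)
qed

lemma tAut_inv: assumes g: "g \<in> tAut" shows "inv g \<in> tAut"
proof (rule tAut_intro)
  have b: "bij g" and im: "g ` tverts = tverts"
    using g by (simp_all add: tAut_def)
  show "inj_on (inv g) tverts"
    using bij_imp_bij_inv[OF b] by (meson bij_def inj_on_subset subset_UNIV)
  show "inv g ` tverts = tverts"
    using im b by (metis bij_def image_inv_f_f)
  then have inv_in: "inv g v \<in> tverts" if "v \<in> tverts" for v
    using that by blast
  show "inv g x = x" if "x \<notin> tverts" for x
  proof -
    have "x = inv g x"
      using tAut_outside[OF g that] b by (simp add: bij_inv_eq_iff)
    then show ?thesis
      by simp
  qed
  show "tadj (inv g u) (inv g w) \<longleftrightarrow> tadj u w" if "u \<in> tverts" "w \<in> tverts" for u w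
    using tAut_tadj[OF g inv_in[OF that(1)] inv_in[OF that(2)]] g by simp
qed

lemma tAut_tnb:
  assumes "g \<in> tAut" "v \<in> tverts"
  shows "g (tnb v a) = tnb (g v) (sigma g v a)"
proof -
  have "tadj v (tnb v a)"
    using assms(2) tnb_in_tverts by (auto simp: tadj_iff_tnb)
  then have "tadj (g v) (g (tnb v a))"
    using tAut_tadj[OF assms tnb_in_tverts[OF assms(2)]] by simp
  then obtain e where "g (tnb v a) = tnb (g v) e"
    by (auto simp: tadj_iff_tnb)
  then show ?thesis
    by (simp add: sigma_def)
qed

lemma inj_sigma: assumes "g \<in> tAut" "v \<in> tverts" shows "inj (sigma g v)"
proof (rule injI)
  fix a b assume "sigma g v a = sigma g v b"
  then have "g (tnb v a) = g (tnb v b)"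
    using tAut_tnb[OF assms] by metis
  then show "a = b"
    using tAut_bij[OF assms(1)] inj_tnb by (metis bij_is_inj injD)
qed

lemma bij_sigma:
  fixes g :: "'a::finite list \<Rightarrow> 'a list"
  assumes "g \<in> tAut" "v \<in> tverts"
  shows "bij (sigma g v)"
  using inj_sigma[OF assms] finite_UNIV_inj_surj[of "sigma g v"] by (simp add: bij_def)

lemma sigma_id [simp]: "sigma id v = id"
  by (auto simp: sigma_def)

lemma sigma_comp:
  assumes "g \<in> tAut" "k \<in> tAut" "v \<in> tverts"
  shows "sigma (g \<circ> k) v = sigma g (k v) \<circ> sigma k v"
  using tAut_tnb[OF assms(2,3)] tAut_tnb[OF assms(1) tAut_in_tverts[OF assms(2,3)]]
  by (auto simp: sigma_def)

lemma sigma_inv: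
  fixes g :: "'a::finite list \<Rightarrow> 'a list"
  assumes g: "g \<in> tAut" and v: "v \<in> tverts"
  shows "sigma (inv g) v = inv (sigma g (inv g v))"
proof -
  have inv_v: "inv g v \<in> tverts"
    using tAut_inv[OF g] v by (rule tAut_in_tverts)
  let ?p = "sigma g (inv g v)"
  have "?p \<circ> sigma (inv g) v = id"
    using sigma_comp[OF g tAut_inv[OF g] v] g by simp
  then have "(inv ?p \<circ> ?p) \<circ> sigma (inv g) v = inv ?p"
    by (simp add: comp_assoc)
  then show ?thesis
    using bij_sigma[OF g inv_v] by (simp add: bij_is_inj)
qed

lemma sigma_comp_fixing_star:
  assumes "k v = v" "\<And>a. k (tnb v a) = tnb v a"
  shows "sigma (g \<circ> k) v = sigma g v"
  using assms by (simp add: sigma_def)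

lemma tAut_fixing_root_snoc:
  assumes g: "g \<in> tAut" and root: "g [] = []"
  shows "w @ [a] \<in> tverts \<Longrightarrow> g (w @ [a]) = g w @ [sigma g w a]"
proof (induction w arbitrary: a rule: rev_induct)
  case Nil
  show ?case
    using tAut_tnb[OF g tverts_Nil, of a] root by (simp add: tnb_def)
next
  case (snoc b u)
  let ?w = "u @ [b]"
  have w: "?w \<in> tverts" and ab: "b \<noteq> a"
    using tverts_snoc[of ?w a] snoc.prems by auto
  have IH: "g ?w = g u @ [sigma g u b]"
    using snoc.IH w by blast
  have "g u = tnb (g ?w) (sigma g ?w b)"
    using tAut_tnb[OF g w, of b] by (simp add: tnb_def)
  then have "sigma g ?w b = sigma g u b"
    \<comment> \<open>otherwise \<open>g u\<close> would be a child of \<open>g ?w\<close>, hence longer than it\<close>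
    using IH by (auto simp: tnb_def split: if_splits)
  moreover have "sigma g ?w a \<noteq> sigma g ?w b"
    using inj_sigma[OF g w] ab by (simp add: inj_eq)
  ultimately show ?case
    using tAut_tnb[OF g w, of a] tnb_snoc[OF snoc.prems] IH by (simp add: tnb_def)
qed

lemma tAut_fixing_root_length:
  assumes "g \<in> tAut" "g [] = []"
  shows "w \<in> tverts \<Longrightarrow> length (g w) = length w"
  by (induction w rule: rev_induct) (simp_all add: assms tAut_fixing_root_snoc tverts_snoc)

section \<open>The groups \<open>U(F)\<close>, \<open>G(F)\<close> and \<open>G(F,F')\<close>\<close>

lemma perm_group_bij: "perm_group F \<Longrightarrow> f \<in> F \<Longrightarrow> bij f"
  by (simp add: perm_group_def)

lemma perm_group_id: "perm_group F \<Longrightarrow> id \<in> F"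
  by (simp add: perm_group_def)

lemma perm_group_comp: "perm_group F \<Longrightarrow> f \<in> F \<Longrightarrow> g \<in> F \<Longrightarrow> f \<circ> g \<in> F"
  by (simp add: perm_group_def)

lemma perm_group_inv: "perm_group F \<Longrightarrow> f \<in> F \<Longrightarrow> inv f \<in> F"
  by (simp add: perm_group_def)

lemma U_tAut: "g \<in> U F \<Longrightarrow> g \<in> tAut"
  by (simp add: U_def)

lemma U_sigma: "g \<in> U F \<Longrightarrow> v \<in> tverts \<Longrightarrow> sigma g v \<in> F"
  by (simp add: U_def)

lemma G2_tAut: "g \<in> G2 F F' \<Longrightarrow> g \<in> tAut"
  by (simp add: G2_def G_def)

lemma U_mono: "F \<subseteq> F' \<Longrightarrow> U F \<subseteq> U F'"
  by (auto simp: U_def)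

lemma G_mono: "F \<subseteq> F' \<Longrightarrow> G F \<subseteq> G F'"
  unfolding G_def by (auto elim!: rev_finite_subset)

lemma U_Int: "U F \<inter> U F' = U (F \<inter> F')"
  by (auto simp: U_def)

lemma U_subset_G: "U F \<subseteq> G F"
proof
  fix g assume g: "g \<in> U F"
  then have "{v \<in> tverts. sigma g v \<notin> F} = {}"
    by (auto simp: U_def)
  then have "finite {v \<in> tverts. sigma g v \<notin> F}"
    by (metis finite.emptyI)
  then show "g \<in> G F"
    using U_tAut[OF g] by (simp add: G_def)
qed

lemma id_in_U: "perm_group F \<Longrightarrow> id \<in> U F"
  by (simp add: U_def id_in_tAut perm_group_id)

lemma U_comp:
  assumes F: "perm_group F" and g: "g \<in> U F" and k: "k \<in> U F"
  shows "g \<circ> k \<in> U F"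
  using U_tAut[OF g] U_tAut[OF k] U_sigma[OF g] U_sigma[OF k]
  by (simp add: U_def tAut_comp sigma_comp tAut_in_tverts perm_group_comp[OF F])

lemma U_inv:
  fixes g :: "'a::finite list \<Rightarrow> 'a list"
  assumes F: "perm_group F" and g: "g \<in> U F"
  shows "inv g \<in> U F"
  using U_tAut[OF g] U_sigma[OF g] tAut_in_tverts[OF tAut_inv[OF U_tAut[OF g]]]
  by (simp add: U_def tAut_inv sigma_inv perm_group_inv[OF F])

text \<open>Along a product the bad vertices of \<open>g \<circ> k\<close> are bad for \<open>k\<close> or are
  preimages under \<open>k\<close> of bad vertices of \<open>g\<close>.\<close>
lemma G_comp:
  assumes F: "perm_group F" and g: "g \<in> G F" and k: "k \<in> G F"
  shows "g \<circ> k \<in> G F"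
proof -
  have gA: "g \<in> tAut" and kA: "k \<in> tAut"
    using g k by (simp_all add: G_def)
  have "{v \<in> tverts. sigma (g \<circ> k) v \<notin> F}
      \<subseteq> inv k ` {w \<in> tverts. sigma g w \<notin> F} \<union> {v \<in> tverts. sigma k v \<notin> F}"
  proof (intro subsetI UnCI)
    fix v assume "v \<in> {v \<in> tverts. sigma (g \<circ> k) v \<notin> F}" "v \<notin> {v \<in> tverts. sigma k v \<notin> F}"
    then have v: "v \<in> tverts" and "sigma g (k v) \<notin> F"
      using sigma_comp[OF gA kA] perm_group_comp[OF F] by auto
    then show "v \<in> inv k ` {w \<in> tverts. sigma g w \<notin> F}"
      using tAut_in_tverts[OF kA v] kA by (auto intro!: image_eqI[where x = "k v"])
  qed
  moreover have "finite (inv k ` {w \<in> tverts. sigma g w \<notin> F} \<union> {v \<in> tverts. sigma k v \<notin> F})"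
    using g k by (simp add: G_def)
  ultimately have "finite {v \<in> tverts. sigma (g \<circ> k) v \<notin> F}"
    by (rule finite_subset)
  then show ?thesis
    using tAut_comp[OF gA kA] by (simp add: G_def)
qed

lemma G_inv:
  fixes g :: "'a::finite list \<Rightarrow> 'a list"
  assumes F: "perm_group F" and g: "g \<in> G F"
  shows "inv g \<in> G F"
proof -
  have gA: "g \<in> tAut"
    using g by (simp add: G_def)
  have "{v \<in> tverts. sigma (inv g) v \<notin> F} \<subseteq> g ` {w \<in> tverts. sigma g w \<notin> F}"
  proof
    fix v assume "v \<in> {v \<in> tverts. sigma (inv g) v \<notin> F}"
    then have v: "v \<in> tverts" and bad: "sigma (inv g) v \<notin> F"
      by auto
    have "sigma g (inv g v) \<notin> F"
      using bad sigma_inv[OF gA v] perm_group_inv[OF F] by metis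
    then show "v \<in> g ` {w \<in> tverts. sigma g w \<notin> F}"
      using tAut_in_tverts[OF tAut_inv[OF gA] v] gA by (auto intro!: image_eqI[where x = "inv g v"])
  qed
  moreover have "finite (g ` {w \<in> tverts. sigma g w \<notin> F})"
    using g by (simp add: G_def)
  ultimately have "finite {v \<in> tverts. sigma (inv g) v \<notin> F}"
    by (rule finite_subset)
  then show ?thesis
    using tAut_inv[OF gA] by (simp add: G_def)
qed

lemma G2_mono: "F \<subseteq> H \<Longrightarrow> F' \<subseteq> H' \<Longrightarrow> G2 F F' \<subseteq> G2 H H'"
  using G_mono U_mono unfolding G2_def by blast

lemma U_subset_G2: "F \<subseteq> F' \<Longrightarrow> U F \<subseteq> G2 F F'"
  using U_subset_G U_mono unfolding G2_def by blast

lemma id_in_G2: "perm_group F \<Longrightarrow> perm_group F' \<Longrightarrow> id \<in> G2 F F'"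
  using id_in_U U_subset_G unfolding G2_def by blast

lemma G2_comp:
  "perm_group F \<Longrightarrow> perm_group F' \<Longrightarrow> g \<in> G2 F F' \<Longrightarrow> k \<in> G2 F F' \<Longrightarrow> g \<circ> k \<in> G2 F F'"
  using G_comp U_comp unfolding G2_def by blast

lemma G2_inv:
  fixes g :: "'a::finite list \<Rightarrow> 'a list"
  shows "perm_group F \<Longrightarrow> perm_group F' \<Longrightarrow> g \<in> G2 F F' \<Longrightarrow> inv g \<in> G2 F F'"
  using G_inv U_inv unfolding G2_def by blast

lemma is_subgroup_G2:
  fixes F F' H H' :: "('a::finite \<Rightarrow> 'a) set"
  assumes "perm_group F" "perm_group F'" "F \<subseteq> H" "F' \<subseteq> H'"
  shows "is_subgroup (G2 F F') (G2 H H')"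
  using G2_mono[OF assms(3,4)] id_in_G2 G2_comp G2_inv assms(1,2)
  unfolding is_subgroup_def by blast

text \<open>Outside the finitely many vertices where \<open>g \<in> G2 H H' \<inter> U F'\<close> leaves \<open>H\<close>,
  its local permutations lie in \<open>H \<inter> F' = F\<close>.\<close>
lemma G2_eq_G2_Int_U:
  assumes "F \<subseteq> H" "F' \<subseteq> H'" "H \<inter> F' = F"
  shows "G2 F F' = G2 H H' \<inter> U F'"
proof
  show "G2 F F' \<subseteq> G2 H H' \<inter> U F'"
    using G2_mono[OF assms(1,2)] by (auto simp: G2_def)
  show "G2 H H' \<inter> U F' \<subseteq> G2 F F'"
  proof
    fix g assume g: "g \<in> G2 H H' \<inter> U F'"
    then have "{v \<in> tverts. sigma g v \<notin> F} \<subseteq> {v \<in> tverts. sigma g v \<notin> H}"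
      using assms(3) U_sigma[of g F'] by blast
    then show "g \<in> G2 F F'"
      using g by (auto simp: G2_def G_def elim!: rev_finite_subset)
  qed
qed

section \<open>The topology of \<open>G(H,H')\<close>\<close>

abbreviation lcoset :: "('b \<Rightarrow> 'b) \<Rightarrow> ('b \<Rightarrow> 'b) set \<Rightarrow> ('b \<Rightarrow> 'b) set" where
  "lcoset g K \<equiv> (\<lambda>k. g \<circ> k) ` K"

lemma fixU_subset_U: "fixU H S \<subseteq> U H"
  by (auto simp: fixU_def)

lemma fixU_Un: "fixU H (S \<union> T) = fixU H S \<inter> fixU H T"
  by (auto simp: fixU_def)

lemma id_in_fixU: "perm_group H \<Longrightarrow> id \<in> fixU H S"
  by (simp add: fixU_def id_in_U)

lemma fixU_comp: "perm_group H \<Longrightarrow> k \<in> fixU H S \<Longrightarrow> k' \<in> fixU H S \<Longrightarrow> k \<circ> k' \<in> fixU H S"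
  by (simp add: fixU_def U_comp)

lemma lcoset_self: assumes "perm_group H" shows "g \<in> lcoset g (fixU H S)"
  by (rule image_eqI[where x = id]) (simp_all add: id_in_fixU assms)

lemma openin_Gtop:
  "openin (Gtop H H') W \<longleftrightarrow>
     W \<subseteq> G2 H H' \<and> (\<forall>g\<in>W. \<exists>S. finite S \<and> S \<subseteq> tverts \<and> lcoset g (fixU H S) \<subseteq> W)"
  (is "_ \<longleftrightarrow> ?open W")
proof -
  have "istopology ?open"
    unfolding istopology_def
  proof (rule conjI; intro allI impI)
    fix V W assume V: "?open V" and W: "?open W"
    show "?open (V \<inter> W)"
    proof (intro conjI ballI)
      show "V \<inter> W \<subseteq> G2 H H'"
        using V by blast
      fix g assume "g \<in> V \<inter> W"
      then obtain S T where "finite S" "S \<subseteq> tverts" "lcoset g (fixU H S) \<subseteq> V"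
        and "finite T" "T \<subseteq> tverts" "lcoset g (fixU H T) \<subseteq> W"
        using V W by (meson IntD1 IntD2)
      then show "\<exists>R. finite R \<and> R \<subseteq> tverts \<and> lcoset g (fixU H R) \<subseteq> V \<inter> W"
        by (intro exI[of _ "S \<union> T"]) (auto simp: fixU_Un)
    qed
  next
    fix \<K> assume \<K>: "\<forall>W\<in>\<K>. ?open W"
    show "?open (\<Union>\<K>)"
    proof (intro conjI ballI)
      show "\<Union>\<K> \<subseteq> G2 H H'"
        using \<K> by blast
      fix g assume "g \<in> \<Union>\<K>"
      then obtain W where "W \<in> \<K>" "g \<in> W"
        by blast
      then show "\<exists>S. finite S \<and> S \<subseteq> tverts \<and> lcoset g (fixU H S) \<subseteq> \<Union>\<K>"
        using \<K> by (meson Union_upper subset_trans)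
    qed
  qed
  then show ?thesis
    unfolding Gtop_def by (simp only: topology_inverse')
qed

lemma lcoset_fixU_subset_G2:
  assumes "perm_group H" "perm_group H'" "H \<subseteq> H'" "g \<in> G2 H H'"
  shows "lcoset g (fixU H S) \<subseteq> G2 H H'"
proof
  fix x assume "x \<in> lcoset g (fixU H S)"
  then obtain k where "k \<in> fixU H S" "x = g \<circ> k"
    by blast
  then show "x \<in> G2 H H'"
    using fixU_subset_U U_subset_G2[OF assms(3)] G2_comp[OF assms(1,2,4)] by blast
qed

lemma topspace_Gtop:
  assumes "perm_group H" "perm_group H'" "H \<subseteq> H'"
  shows "topspace (Gtop H H') = G2 H H'"
proof -
  have "openin (Gtop H H') (G2 H H')"
    unfolding openin_Gtop using lcoset_fixU_subset_G2[OF assms] by blast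
  then have "G2 H H' \<subseteq> topspace (Gtop H H')"
    by (rule openin_subset)
  moreover have "topspace (Gtop H H') \<subseteq> G2 H H'"
    using openin_topspace[of "Gtop H H'"] by (simp only: openin_Gtop)
  ultimately show ?thesis
    by blast
qed

lemma openin_Gtop_lcoset:
  assumes pH: "perm_group H" and "perm_group H'" "H \<subseteq> H'" "g \<in> G2 H H'"
    and "finite S" "S \<subseteq> tverts"
  shows "openin (Gtop H H') (lcoset g (fixU H S))"
proof -
  have "lcoset (g \<circ> k) (fixU H S) \<subseteq> lcoset g (fixU H S)" if "k \<in> fixU H S" for k
    using fixU_comp[OF pH that] by (auto simp: comp_assoc)
  then show ?thesis
    unfolding openin_Gtop using lcoset_fixU_subset_G2[OF assms(1-4)] assms(5,6) by blast
qed

text \<open>A point \<open>g\<close> outside \<open>U F'\<close> has a bad vertex \<open>v\<close>; the whole coset of the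
  stabiliser of the star of \<open>v\<close> through \<open>g\<close> has the same local permutation at \<open>v\<close>.\<close>
lemma closedin_G2:
  fixes F F' H H' :: "('a::finite \<Rightarrow> 'a) set"
  assumes pH: "perm_group H" "perm_group H'" "H \<subseteq> H'"
    and sub: "F \<subseteq> H" "F' \<subseteq> H'" "H \<inter> F' = F"
  shows "closedin (Gtop H H') (G2 F F')"
proof -
  have eq: "G2 F F' = G2 H H' \<inter> U F'"
    using G2_eq_G2_Int_U[OF sub] .
  have "\<exists>T. openin (Gtop H H') T \<and> g \<in> T \<and> T \<subseteq> G2 H H' - G2 F F'"
    if g: "g \<in> G2 H H' - G2 F F'" for g
  proof -
    have gG: "g \<in> G2 H H'" and "g \<notin> U F'"
      using g eq by auto
    then obtain v where v: "v \<in> tverts" "sigma g v \<notin> F'"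
      using G2_tAut[OF gG] by (auto simp: U_def)
    define S where "S = insert v (range (tnb v))"
    have S: "finite S" "S \<subseteq> tverts"
      unfolding S_def using tnb_star_subset[OF v(1)] by auto
    have "lcoset g (fixU H S) \<subseteq> G2 H H' - G2 F F'"
    proof
      fix x assume x: "x \<in> lcoset g (fixU H S)"
      then obtain k where k: "k \<in> fixU H S" "x = g \<circ> k"
        by blast
      then have "sigma x v = sigma g v"
        using sigma_comp_fixing_star[of k v g] by (simp add: fixU_def S_def)
      then have "x \<notin> U F'"
        using v U_sigma[of x F' v] by metis
      moreover have "x \<in> G2 H H'"
        using lcoset_fixU_subset_G2[OF pH gG] x by (rule subsetD)
      ultimately show "x \<in> G2 H H' - G2 F F'"
        using eq by simp
    qed
    then show ?thesis
      using openin_Gtop_lcoset[OF pH gG S] lcoset_self[OF pH(1)] by (intro exI conjI)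
  qed
  then have "openin (Gtop H H') (G2 H H' - G2 F F')"
    by (subst openin_subopen) (rule ballI)
  moreover have "G2 F F' \<subseteq> G2 H H'"
    using eq by (rule equalityD1[THEN subset_trans]) (rule Int_lower1)
  ultimately show ?thesis
    unfolding closedin_def topspace_Gtop[OF pH] by (intro conjI)
qed

text \<open>At each vertex it fixes, the local permutation fixes the colour of an edge that is
  fixed too, hence is trivial; so the fixed vertices spread over the whole tree.\<close>
lemma U_free_fixing_edge:
  fixes k :: "'a::finite list \<Rightarrow> 'a list"
  assumes F: "acts_freely F" and kU: "k \<in> U F"
    and k0: "k [] = []" and k1: "k [a] = [a]"
  shows "k = id"
proof -
  have kA: "k \<in> tAut"
    using U_tAut[OF kU] .
  have free: "f = id" if "f \<in> F" "f x = x" for f x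
    using F that unfolding acts_freely_def by blast
  have "k w = w \<and> sigma k w = id" if "w \<in> tverts" for w
    using that
  proof (induction w rule: rev_induct)
    case Nil
    have "sigma k [] a = a"
      using k0 k1 by (simp add: sigma_def tcol_def tnb_def)
    then show ?case
      using free U_sigma[OF kU tverts_Nil] k0 by blast
  next
    case (snoc b w)
    have w: "w \<in> tverts"
      using snoc.prems by (simp add: tverts_snoc)
    have IH: "k w = w" "sigma k w = id"
      using snoc.IH w by auto
    have kwb: "k (w @ [b]) = w @ [b]"
      using tAut_tnb[OF kA w, of b] IH tnb_snoc[OF snoc.prems] by simp
    then have "sigma k (w @ [b]) b = b"
      using IH(1) by (simp add: sigma_def tcol_def tnb_def)
    then show ?case
      using free U_sigma[OF kU snoc.prems] kwb by blast
  qed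
  then show ?thesis
    using tAut_outside[OF kA] by (metis eq_id_iff)
qed

lemma G2_Int_lcoset_edge_stabiliser:
  fixes F F' H :: "('a::finite \<Rightarrow> 'a) set"
  assumes pH: "perm_group H" and pF: "perm_group F" "perm_group F'"
    and HF': "H \<inter> F' = F" and F: "acts_freely F" and \<gamma>: "\<gamma> \<in> G2 F F'"
  shows "lcoset \<gamma> (fixU H {[], [a]}) \<inter> G2 F F' = {\<gamma>}"
proof (intro equalityI subsetI)
  fix x assume x: "x \<in> lcoset \<gamma> (fixU H {[], [a]}) \<inter> G2 F F'"
  then obtain k where k: "k \<in> fixU H {[], [a]}" "x = \<gamma> \<circ> k"
    by blast
  have "k = inv \<gamma> \<circ> x"
    using k(2) G2_tAut[OF \<gamma>] by (simp add: o_assoc)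
  also have "\<dots> \<in> G2 F F'"
    using G2_comp[OF pF G2_inv[OF pF \<gamma>]] x by blast
  finally have "k \<in> U F'"
    by (simp add: G2_def)
  moreover have "k \<in> U H"
    using k(1) fixU_subset_U by blast
  ultimately have "k \<in> U F"
    using U_Int HF' by blast
  then have "k = id"
    using U_free_fixing_edge[OF F, of k a] k(1) by (simp add: fixU_def)
  then show "x \<in> {\<gamma>}"
    using k(2) by simp
next
  fix x assume "x \<in> {\<gamma>}"
  then show "x \<in> lcoset \<gamma> (fixU H {[], [a]}) \<inter> G2 F F'"
    using \<gamma> lcoset_self[OF pH] by simp
qed

lemma discrete_in_G2:
  fixes F F' H H' :: "('a::finite \<Rightarrow> 'a) set"
  assumes pH: "perm_group H" "perm_group H'" "H \<subseteq> H'"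
    and pF: "perm_group F" "perm_group F'"
    and sub: "F \<subseteq> H" "F' \<subseteq> H'" "H \<inter> F' = F" and F: "acts_freely F"
  shows "discrete_in (Gtop H H') (G2 F F')"
proof -
  have G2_sub: "G2 F F' \<subseteq> G2 H H'"
    using G2_mono[OF sub(1,2)] .
  have edge: "finite {[], [a]}" "{[], [a]} \<subseteq> tverts" for a :: 'a
    by (auto simp: tverts_def)
  have "openin (subtopology (Gtop H H') (G2 F F')) {\<gamma>}" if \<gamma>: "\<gamma> \<in> G2 F F'" for \<gamma>
  proof -
    have "openin (Gtop H H') (lcoset \<gamma> (fixU H {[], [undefined]}))"
      using openin_Gtop_lcoset[OF pH _ edge] G2_sub \<gamma> by blast
    then show ?thesis
      unfolding openin_subtopology
      using G2_Int_lcoset_edge_stabiliser[OF pH(1) pF sub(3) F \<gamma>] by metis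
  qed
  moreover have "topspace (subtopology (Gtop H H') (G2 F F')) = G2 F F'"
    using topspace_Gtop[OF pH] G2_sub by auto
  ultimately have "discrete_topology (G2 F F') = subtopology (Gtop H H') (G2 F F')"
    by (simp add: discrete_topology_unique)
  then show ?thesis
    unfolding discrete_in_def by simp
qed

section \<open>Automorphisms with prescribed local permutations\<close>

text \<open>The image of \<open>w @ [a]\<close> is the neighbour of the image of \<open>w\<close>
  along colour \<open>lift_perm c p w a\<close>, and \<open>c (w @ [a]) a b\<close> is the local permutation chosen
  at \<open>w @ [a]\<close> once its parent edge, of colour \<open>a\<close>, is known to go to colour \<open>b\<close>.\<close>
primrec lift_rev ::
  "('a list \<Rightarrow> 'a \<Rightarrow> 'a \<Rightarrow> ('a \<Rightarrow> 'a)) \<Rightarrow> ('a \<Rightarrow> 'a) \<Rightarrow> 'a list \<Rightarrow> 'a list \<times> ('a \<Rightarrow> 'a)"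
where
  "lift_rev c p [] = ([], p)"
| "lift_rev c p (a # ws) =
     (tnb (fst (lift_rev c p ws)) (snd (lift_rev c p ws) a),
      c (rev (a # ws)) a (snd (lift_rev c p ws) a))"

definition lift_vert :: "('a list \<Rightarrow> 'a \<Rightarrow> 'a \<Rightarrow> ('a \<Rightarrow> 'a)) \<Rightarrow> ('a \<Rightarrow> 'a) \<Rightarrow> 'a list \<Rightarrow> 'a list"
  where "lift_vert c p w = fst (lift_rev c p (rev w))"

definition lift_perm :: "('a list \<Rightarrow> 'a \<Rightarrow> 'a \<Rightarrow> ('a \<Rightarrow> 'a)) \<Rightarrow> ('a \<Rightarrow> 'a) \<Rightarrow> 'a list \<Rightarrow> 'a \<Rightarrow> 'a"
  where "lift_perm c p w = snd (lift_rev c p (rev w))"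

definition lift_aut :: "('a list \<Rightarrow> 'a \<Rightarrow> 'a \<Rightarrow> ('a \<Rightarrow> 'a)) \<Rightarrow> ('a \<Rightarrow> 'a) \<Rightarrow> 'a list \<Rightarrow> 'a list"
  where "lift_aut c p x = (if x \<in> tverts then lift_vert c p x else x)"

lemma lift_vert_Nil [simp]: "lift_vert c p [] = []"
  by (simp add: lift_vert_def)

lemma lift_perm_Nil [simp]: "lift_perm c p [] = p"
  by (simp add: lift_perm_def)

lemma lift_vert_snoc [simp]: "lift_vert c p (w @ [a]) = tnb (lift_vert c p w) (lift_perm c p w a)"
  by (simp add: lift_vert_def lift_perm_def)

lemma lift_perm_snoc [simp]: "lift_perm c p (w @ [a]) = c (w @ [a]) a (lift_perm c p w a)"
  by (simp add: lift_vert_def lift_perm_def)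

lemma lift_aut_Nil: "lift_aut c p [] = []"
  by (simp add: lift_aut_def)

locale lift_data =
  fixes c :: "'a::finite list \<Rightarrow> 'a \<Rightarrow> 'a \<Rightarrow> ('a \<Rightarrow> 'a)" and p :: "'a \<Rightarrow> 'a"
    and R :: "('a \<Rightarrow> 'a) set"
  assumes R_bij: "\<And>q. q \<in> R \<Longrightarrow> bij q"
    and p_in_R: "p \<in> R"
    and c_in_R: "\<And>w a q. q \<in> R \<Longrightarrow> c w a (q a) \<in> R"
    and c_parent: "\<And>w a q. q \<in> R \<Longrightarrow> c w a (q a) a = q a"
begin

lemma lift_perm_in_R: "lift_perm c p w \<in> R"
  by (induction w rule: rev_induct) (simp_all add: p_in_R c_in_R)

lemma bij_lift_perm: "bij (lift_perm c p w)"
  using R_bij lift_perm_in_R by blast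

lemma lift_perm_parent: "lift_perm c p (w @ [a]) a = lift_perm c p w a"
  using c_parent[OF lift_perm_in_R] by simp

text \<open>The image of a reduced word is reduced, since \<open>lift_perm c p w\<close> sends the colour
  \<open>last w\<close> of the parent edge to the colour \<open>last (lift_vert c p w)\<close>.\<close>
lemma lift_vert_props:
  "w \<in> tverts \<Longrightarrow> lift_vert c p w \<in> tverts \<and> length (lift_vert c p w) = length w
     \<and> (w \<noteq> [] \<longrightarrow> last (lift_vert c p w) = lift_perm c p w (last w))"
proof (induction w rule: rev_induct)
  case (snoc a w)
  have w: "w \<in> tverts" and "w = [] \<or> last w \<noteq> a"
    using snoc.prems by (simp_all add: tverts_snoc)
  then have "lift_vert c p w = [] \<or> last (lift_vert c p w) \<noteq> lift_perm c p w a"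
  proof (cases "w = []")
    case False
    then show ?thesis
      using snoc.IH w \<open>w = [] \<or> last w \<noteq> a\<close> bij_lift_perm[of w]
      by (simp add: bij_is_inj inj_eq)
  qed simp
  then show ?case
    using snoc.IH w lift_perm_parent by (auto simp: tnb_def tverts_snoc)
qed simp

lemma lift_vert_snoc_tverts:
  "w @ [a] \<in> tverts \<Longrightarrow> lift_vert c p (w @ [a]) = lift_vert c p w @ [lift_perm c p w a]"
  using lift_vert_props[of "w @ [a]"] lift_vert_props[of w] lift_perm_parent
  by (auto simp: tnb_def tverts_snoc split: if_splits)

lemma inj_on_lift_vert: "inj_on (lift_vert c p) tverts"
proof -
  have "u \<in> tverts \<Longrightarrow> w \<in> tverts \<Longrightarrow> lift_vert c p u = lift_vert c p w \<Longrightarrow> u = w" for u w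
  proof (induction u arbitrary: w rule: rev_induct)
    case Nil
    then show ?case
      using lift_vert_props[of w] by simp
  next
    case (snoc a u)
    then obtain w' b where w: "w = w' @ [b]"
      using lift_vert_props[of w] lift_vert_props[of "u @ [a]"] by (cases w rule: rev_cases) auto
    then have "lift_vert c p u = lift_vert c p w'" "lift_perm c p u a = lift_perm c p w' b"
      using snoc.prems lift_vert_snoc_tverts by auto
    moreover have "u = w'"
      using snoc.IH snoc.prems calculation(1) w by (simp add: tverts_snoc)
    ultimately show ?case
      using w bij_lift_perm by (metis bij_is_inj injD)
  qed
  then show ?thesis
    by (rule inj_onI)
qed

lemma lift_vert_onto: "lift_vert c p ` tverts = tverts"
proof (intro equalityI subsetI)
  show "x \<in> tverts" if "x \<in> lift_vert c p ` tverts" for x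
    using that lift_vert_props by blast
  show "x \<in> lift_vert c p ` tverts" if "x \<in> tverts" for x
    using that
  proof (induction x rule: rev_induct)
    case (snoc e y)
    obtain w where w: "w \<in> tverts" "lift_vert c p w = y"
      using snoc.IH snoc.prems by (auto simp: tverts_snoc)
    obtain a where a: "lift_perm c p w a = e"
      using bij_lift_perm by (metis bij_pointE)
    have "w = [] \<or> last w \<noteq> a"
      using lift_vert_props[OF w(1)] snoc.prems w(2) a by (auto simp: tverts_snoc)
    then have "w @ [a] \<in> tverts"
      using w(1) by (simp add: tverts_snoc)
    then show ?case
      using lift_vert_snoc_tverts w(2) a by (metis image_eqI)
  qed (rule image_eqI[where x = "[]"], simp_all)
qed

lemma lift_aut_tnb:
  assumes w: "w \<in> tverts"
  shows "lift_aut c p (tnb w b) = tnb (lift_aut c p w) (lift_perm c p w b)"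
proof (cases "w \<noteq> [] \<and> last w = b")
  case True
  then obtain u where u: "w = u @ [b]"
    by (cases w rule: rev_cases) auto
  then have "u \<in> tverts"
    using w by (simp add: tverts_snoc)
  moreover have "tnb (lift_vert c p w) (lift_perm c p w b) = lift_vert c p u"
    using u lift_perm_parent tnb_tnb[OF conjunct1[OF lift_vert_props[OF calculation]]] by simp
  ultimately show ?thesis
    using u w by (simp add: lift_aut_def tnb_def)
next
  case False
  then have "w @ [b] \<in> tverts"
    using w by (auto simp: tverts_snoc)
  then show ?thesis
    using False w tnb_in_tverts[OF w] by (auto simp: lift_aut_def tnb_def)
qed

lemma lift_aut_in_tAut: "lift_aut c p \<in> tAut"
proof (rule tAut_intro_tnb[where s = "lift_perm c p"])
  show "inj_on (lift_aut c p) tverts"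
    using inj_on_lift_vert by (simp add: inj_on_def lift_aut_def)
  show "lift_aut c p ` tverts = tverts"
    using lift_vert_onto by (simp add: lift_aut_def)
  show "lift_aut c p x = x" if "x \<notin> tverts" for x
    using that by (simp add: lift_aut_def)
  show "inj (lift_perm c p v)" for v
    using bij_lift_perm by (rule bij_is_inj)
  show "lift_aut c p (tnb v a) = tnb (lift_aut c p v) (lift_perm c p v a)" if "v \<in> tverts" for v a
    using lift_aut_tnb[OF that] .
qed

lemma sigma_lift_aut: "w \<in> tverts \<Longrightarrow> sigma (lift_aut c p) w = lift_perm c p w"
  by (simp add: sigma_def lift_aut_tnb)

end

section \<open>Factorisation through the root stabiliser\<close>

text \<open>Left multiplication by a letter, viewing \<open>tverts\<close> as the free product of
  copies of \<open>Z/2\<close>; it preserves all colours.\<close>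
definition lmul :: "'a \<Rightarrow> 'a list \<Rightarrow> 'a list" where
  "lmul x w = (if w \<in> tverts then (if w \<noteq> [] \<and> hd w = x then tl w else x # w) else w)"

lemma lmul_in_tverts: "w \<in> tverts \<Longrightarrow> lmul x w \<in> tverts"
  by (cases w) (auto simp: lmul_def tverts_Cons)

lemma lmul_lmul [simp]: "lmul x (lmul x w) = w"
  by (cases w) (auto simp: lmul_def tverts_Cons)

lemma lmul_tnb:
  assumes w: "w \<in> tverts"
  shows "lmul x (tnb w b) = tnb (lmul x w) b"
proof -
  let ?m = "\<lambda>w. if w \<noteq> [] \<and> hd w = x then tl w else x # w"
  have "?m (tnb w b) = tnb (?m w) b"
    by (cases w; cases "tl w" rule: rev_cases) (auto simp: tnb_def)
  then show ?thesis
    using w tnb_in_tverts[OF w] lmul_in_tverts[OF w] by (simp add: lmul_def)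
qed

lemma lmul_in_tAut: "lmul (x :: 'a::finite) \<in> tAut"
proof (rule tAut_intro_tnb[where s = "\<lambda>v. id"])
  show "inj_on (lmul x) tverts"
    by (rule inj_onI) (metis lmul_lmul)
  show "lmul x ` tverts = tverts"
  proof (intro equalityI subsetI)
    fix w :: "'a list" assume "w \<in> tverts"
    then show "w \<in> lmul x ` tverts"
      using lmul_in_tverts[of w x] by (intro image_eqI[where x = "lmul x w"]) simp_all
  qed (auto simp: lmul_in_tverts)
  show "lmul x w = w" if "w \<notin> tverts" for w
    using that by (simp add: lmul_def)
  show "lmul x (tnb v a) = tnb (lmul x v) (id a)" if "v \<in> tverts" for v a
    using lmul_tnb[OF that] by simp
qed simp

lemma sigma_lmul: "w \<in> tverts \<Longrightarrow> sigma (lmul x) w = id"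
  by (simp add: sigma_def lmul_tnb fun_eq_iff)

lemma lmul_in_U: "perm_group F \<Longrightarrow> lmul (x :: 'a::finite) \<in> U F"
  by (simp add: U_def lmul_in_tAut sigma_lmul perm_group_id)

lemma U_transitive:
  fixes F :: "('a::finite \<Rightarrow> 'a) set"
  assumes F: "perm_group F"
  shows "r \<in> tverts \<Longrightarrow> \<exists>t\<in>U F. t [] = r"
proof (induction r)
  case Nil
  show ?case
    using id_in_U[OF F] by (intro bexI[of _ id]) simp_all
next
  case (Cons x r)
  have r: "r \<in> tverts" "r = [] \<or> hd r \<noteq> x"
    using Cons.prems by (simp_all add: tverts_Cons)
  obtain t where t: "t \<in> U F" "t [] = r"
    using Cons.IH r(1) by blast
  have "lmul x r = x # r"
    using r by (auto simp: lmul_def)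
  then have "(lmul x \<circ> t) [] = x # r"
    using t(2) by simp
  then show ?case
    using U_comp[OF F lmul_in_U[OF F] t(1)] by (intro bexI)
qed

lemma sigma_comp_inv:
  fixes g \<gamma> :: "'a::finite list \<Rightarrow> 'a list"
  assumes "g \<in> tAut" "\<gamma> \<in> tAut" "u \<in> tverts"
  shows "sigma (g \<circ> inv \<gamma>) u = sigma g (inv \<gamma> u) \<circ> inv (sigma \<gamma> (inv \<gamma> u))"
  using sigma_comp[OF assms(1) tAut_inv[OF assms(2)] assms(3)] sigma_inv[OF assms(2,3)] by simp

text \<open>This is where \<open>F' \<subseteq> hat F\<close> enters: it lets the coset of each local
  permutation be prescribed.\<close>
lemma hat_meets_coset:
  assumes F': "perm_group F'" "F' \<subseteq> hat F" and q: "q \<in> F'" and f: "f \<in> F'"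
  shows "\<exists>\<phi>\<in>F. \<phi> (f a) = q a"
proof -
  have "q \<circ> inv f \<in> hat F"
    using perm_group_comp[OF F'(1) q perm_group_inv[OF F'(1) f]] F'(2) by blast
  then obtain \<phi> where "\<phi> \<in> F" "(q \<circ> inv f) (f a) = \<phi> (f a)"
    unfolding hat_def by blast
  then show ?thesis
    using bij_is_inj[OF perm_group_bij[OF F'(1) f]] by auto
qed

lemma exists_tAut_local_cosets:
  fixes F F' :: "('a::finite \<Rightarrow> 'a) set" and f :: "'a list \<Rightarrow> 'a \<Rightarrow> 'a"
  assumes pF: "perm_group F" and pF': "perm_group F'" and FF': "F \<subseteq> F'" "F' \<subseteq> hat F"
    and f: "\<And>v. f v \<in> F'"
  shows "\<exists>\<gamma>\<in>tAut. \<gamma> [] = [] \<and> (\<forall>v\<in>tverts. \<exists>\<phi>\<in>F. sigma \<gamma> v = \<phi> \<circ> f v)"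
proof -
  define c where "c v a b = (SOME q. (\<exists>\<phi>\<in>F. q = \<phi> \<circ> f v) \<and> q a = b)" for v a b
  have c: "(\<exists>\<phi>\<in>F. c v a (q a) = \<phi> \<circ> f v) \<and> c v a (q a) a = q a" if q: "q \<in> F'" for v a q
  proof -
    obtain \<phi> where "\<phi> \<in> F" "\<phi> (f v a) = q a"
      using hat_meets_coset[OF pF' FF'(2) q f] by blast
    then have "\<exists>p. (\<exists>\<phi>\<in>F. p = \<phi> \<circ> f v) \<and> p a = q a"
      by auto
    then show ?thesis
      unfolding c_def by (rule someI_ex)
  qed
  have c_in: "c v a (q a) \<in> F'" if q: "q \<in> F'" for v a q
  proof -
    obtain \<phi> where "\<phi> \<in> F" "c v a (q a) = \<phi> \<circ> f v"
      using c[OF q] by blast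
    then show ?thesis
      using perm_group_comp[OF pF' _ f] FF'(1) by auto
  qed
  have R: "\<And>q. q \<in> F' \<Longrightarrow> bij q" "f [] \<in> F'"
    "\<And>w a q. q \<in> F' \<Longrightarrow> c w a (q a) \<in> F'" "\<And>w a q. q \<in> F' \<Longrightarrow> c w a (q a) a = q a"
    using perm_group_bij[OF pF'] f c_in c by simp_all
  interpret L: lift_data c "f []" F'
    using R by unfold_locales
  have coset: "\<exists>\<phi>\<in>F. lift_perm c (f []) w = \<phi> \<circ> f w" for w
  proof (cases w rule: rev_cases)
    case Nil
    then show ?thesis
      using perm_group_id[OF pF] by (intro bexI[of _ id]) simp_all
  next
    case (snoc u a)
    then show ?thesis
      using c[OF L.lift_perm_in_R[of u]] by simp
  qed
  have "\<forall>v\<in>tverts. \<exists>\<phi>\<in>F. sigma (lift_aut c (f [])) v = \<phi> \<circ> f v"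
    using L.sigma_lift_aut coset by simp
  then show ?thesis
    using L.lift_aut_in_tAut lift_aut_Nil by blast
qed

lemma G2_local_factors:
  assumes pF': "perm_group F'" and H': "H' = setprod H F'" and g: "g \<in> G2 H H'"
  obtains f where "\<And>v. f v \<in> F'" "\<And>v. v \<in> tverts \<Longrightarrow> \<exists>h\<in>H. sigma g v = h \<circ> f v"
    "\<And>v. v \<in> tverts \<Longrightarrow> sigma g v \<in> H \<Longrightarrow> f v = id"
proof -
  have "\<exists>q. q \<in> F' \<and> (v \<in> tverts \<longrightarrow> (\<exists>h\<in>H. sigma g v = h \<circ> q) \<and> (sigma g v \<in> H \<longrightarrow> q = id))"
    for v
  proof (cases "v \<in> tverts \<and> sigma g v \<notin> H")
    case True
    then have "sigma g v \<in> setprod H F'"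
      using g H' by (auto simp: G2_def U_def)
    then show ?thesis
      using True unfolding setprod_def by blast
  next
    case False
    then show ?thesis
      using perm_group_id[OF pF'] by (intro exI[of _ id]) auto
  qed
  then show ?thesis
    using that by metis
qed

text \<open>Write \<open>sigma g v = h \<circ> f v\<close> with \<open>h \<in> H\<close>, \<open>f v \<in> F'\<close> (and \<open>f v = id\<close>
  where \<open>sigma g v \<in> H\<close>) and take \<open>\<gamma>\<close> with \<open>sigma \<gamma> v \<in> F \<circ> f v\<close>;
  then \<open>g \<circ> inv \<gamma>\<close> has all its local permutations in \<open>H \<circ> F = H\<close>.\<close>
lemma G2_root_fixing_factor:
  fixes F F' H H' :: "('a::finite \<Rightarrow> 'a) set"
  assumes pF: "perm_group F" and pF': "perm_group F'" and pH: "perm_group H"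
    and FF': "F \<subseteq> F'" "F' \<subseteq> hat F" and FH: "F \<subseteq> H" and H': "H' = setprod H F'"
    and g: "g \<in> G2 H H'" and root: "g [] = []"
  shows "\<exists>k\<in>fixU H {[]}. \<exists>\<gamma>\<in>G2 F F'. g = k \<circ> \<gamma>"
proof -
  have gA: "g \<in> tAut"
    using G2_tAut[OF g] .
  obtain f where f: "\<And>v. f v \<in> F'"
    and f_split: "\<And>v. v \<in> tverts \<Longrightarrow> \<exists>h\<in>H. sigma g v = h \<circ> f v"
    and f_id: "\<And>v. v \<in> tverts \<Longrightarrow> sigma g v \<in> H \<Longrightarrow> f v = id"
    using G2_local_factors[OF pF' H' g] by metis
  obtain \<gamma> where \<gamma>A: "\<gamma> \<in> tAut" and \<gamma>_root: "\<gamma> [] = []"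
    and \<gamma>_coset: "\<And>v. v \<in> tverts \<Longrightarrow> \<exists>\<phi>\<in>F. sigma \<gamma> v = \<phi> \<circ> f v"
    using exists_tAut_local_cosets[OF pF pF' FF', of f] f by blast
  have "\<gamma> \<in> U F'"
    using \<gamma>A \<gamma>_coset f FF'(1) perm_group_comp[OF pF'] by (fastforce simp: U_def)
  moreover have "{v \<in> tverts. sigma \<gamma> v \<notin> F} \<subseteq> {v \<in> tverts. sigma g v \<notin> H}"
    using \<gamma>_coset f_id by fastforce
  then have "\<gamma> \<in> G F"
    using g \<gamma>A by (auto simp: G2_def G_def elim: finite_subset)
  ultimately have \<gamma>G2: "\<gamma> \<in> G2 F F'"
    by (simp add: G2_def)
  have "sigma (g \<circ> inv \<gamma>) u \<in> H" if u: "u \<in> tverts" for u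
  proof -
    define v where "v = inv \<gamma> u"
    have v: "v \<in> tverts"
      unfolding v_def using tAut_in_tverts[OF tAut_inv[OF \<gamma>A] u] .
    obtain \<phi> h where \<phi>: "\<phi> \<in> F" "sigma \<gamma> v = \<phi> \<circ> f v" and h: "h \<in> H" "sigma g v = h \<circ> f v"
      using \<gamma>_coset[OF v] f_split[OF v] by blast
    have bij: "bij \<phi>" "bij (f v)"
      using perm_group_bij[OF pF \<phi>(1)] perm_group_bij[OF pF' f] .
    have "sigma (g \<circ> inv \<gamma>) u = h \<circ> (f v \<circ> inv (f v)) \<circ> inv \<phi>"
      using sigma_comp_inv[OF gA \<gamma>A u] \<phi>(2) h(2) o_inv_distrib[OF bij]
      by (simp add: v_def comp_assoc)
    also have "\<dots> = h \<circ> inv \<phi>"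
      using surj_iff[THEN iffD1, OF bij_is_surj[OF bij(2)]] by simp
    finally show ?thesis
      using perm_group_comp[OF pH h(1) perm_group_inv[OF pH]] \<phi>(1) FH by auto
  qed
  moreover have "inv \<gamma> [] = []"
    using tAut_inv_apply[OF \<gamma>A, of "[]"] \<gamma>_root by simp
  ultimately have "g \<circ> inv \<gamma> \<in> fixU H {[]}"
    using tAut_comp[OF gA tAut_inv[OF \<gamma>A]] root by (simp add: fixU_def U_def)
  moreover have "g = (g \<circ> inv \<gamma>) \<circ> \<gamma>"
    using \<gamma>A by (simp add: comp_assoc)
  ultimately show ?thesis
    using \<gamma>G2 by blast
qed

lemma G2_eq_root_stabiliser_times_G2:
  fixes F F' H H' :: "('a::finite \<Rightarrow> 'a) set"
  assumes pF: "perm_group F" and pF': "perm_group F'" and pH: "perm_group H" and pH': "perm_group H'"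
    and FF': "F \<subseteq> F'" "F' \<subseteq> hat F" and FH: "F \<subseteq> H" "F' \<subseteq> H'" and HH': "H \<subseteq> H'"
    and H': "H' = setprod H F'"
  shows "{k \<circ> \<gamma> | k \<gamma>. k \<in> fixU H {[]} \<and> \<gamma> \<in> G2 F F'} = G2 H H'"
proof (intro equalityI subsetI)
  fix x assume "x \<in> {k \<circ> \<gamma> | k \<gamma>. k \<in> fixU H {[]} \<and> \<gamma> \<in> G2 F F'}"
  then obtain k \<gamma> where "k \<in> fixU H {[]}" "\<gamma> \<in> G2 F F'" "x = k \<circ> \<gamma>"
    by blast
  then show "x \<in> G2 H H'"
    using fixU_subset_U U_subset_G2[OF HH'] G2_mono[OF FH] G2_comp[OF pH pH'] by blast
next
  fix g assume g: "g \<in> G2 H H'"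
  have gA: "g \<in> tAut"
    using G2_tAut[OF g] .
  obtain t where t: "t \<in> U F" "t [] = inv g []"
    using U_transitive[OF pF] tAut_in_tverts[OF tAut_inv[OF gA] tverts_Nil] by blast
  have tA: "t \<in> tAut"
    using U_tAut[OF t(1)] .
  have "t \<in> G2 H H'"
    using t(1) U_mono[OF FH(1)] U_subset_G2[OF HH'] by blast
  then have "g \<circ> t \<in> G2 H H'"
    using G2_comp[OF pH pH' g] by blast
  moreover have "(g \<circ> t) [] = []"
    using t(2) gA by simp
  ultimately obtain k \<gamma> where k: "k \<in> fixU H {[]}" and \<gamma>: "\<gamma> \<in> G2 F F'" and "g \<circ> t = k \<circ> \<gamma>"
    using G2_root_fixing_factor[OF pF pF' pH FF' FH(1) H'] by blast
  then have "g = k \<circ> (\<gamma> \<circ> inv t)"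
    using tA by (metis comp_assoc comp_id tAut_comp_inv)
  moreover have "\<gamma> \<circ> inv t \<in> G2 F F'"
    using G2_comp[OF pF pF' \<gamma>] U_inv[OF pF t(1)] U_subset_G2[OF FF'(1)] by blast
  ultimately show "g \<in> {k \<circ> \<gamma> | k \<gamma>. k \<in> fixU H {[]} \<and> \<gamma> \<in> G2 F F'}"
    using k by blast
qed

section \<open>Compactness of the root stabiliser\<close>

definition tlevel :: "'a list \<Rightarrow> 'a list set" where
  "tlevel v = {w \<in> tverts. length w = length v}"

lemma finite_tlevel: "finite (tlevel (v :: 'a::finite list))"
proof -
  have "tlevel v \<subseteq> {xs. set xs \<subseteq> UNIV \<and> length xs = length v}"
    by (auto simp: tlevel_def)
  then show ?thesis
    using finite_lists_length_eq[of "UNIV :: 'a set"] by (auto elim: finite_subset)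
qed

definition ext_id :: "('a list \<Rightarrow> 'a list) \<Rightarrow> 'a list \<Rightarrow> 'a list" where
  "ext_id f x = (if x \<in> tverts then f x else x)"

text \<open>The conditions on the restriction \<open>f\<close> of a map to the vertices that make it an element of
  the root stabiliser in \<open>U H\<close>; each of them involves only finitely many vertices at a time.\<close>
definition root_stab_map :: "('a \<Rightarrow> 'a) set \<Rightarrow> ('a list \<Rightarrow> 'a list) \<Rightarrow> bool" where
  "root_stab_map H f \<longleftrightarrow> f [] = [] \<and> inj_on f tverts
     \<and> (\<forall>u\<in>tverts. \<forall>w\<in>tverts. tadj (f u) (f w) \<longleftrightarrow> tadj u w)
     \<and> (\<forall>v\<in>tverts. (\<lambda>a. tcol (f v) (f (tnb v a))) \<in> H)"

lemma sigma_ext_id: "v \<in> tverts \<Longrightarrow> sigma (ext_id f) v = (\<lambda>a. tcol (f v) (f (tnb v a)))"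
  by (simp add: sigma_def ext_id_def tnb_in_tverts)

lemma root_stab_map_if_fixU:
  assumes "ext_id f \<in> fixU H {[]}"
  shows "root_stab_map H f"
proof -
  have A: "ext_id f \<in> tAut" and H: "\<And>v. v \<in> tverts \<Longrightarrow> sigma (ext_id f) v \<in> H"
    and root: "ext_id f [] = []"
    using assms by (auto simp: fixU_def U_def)
  have e: "\<And>x. x \<in> tverts \<Longrightarrow> ext_id f x = f x"
    by (simp add: ext_id_def)
  have "inj_on f tverts"
  proof (rule inj_onI)
    fix u w assume "u \<in> tverts" "w \<in> tverts" "f u = f w"
    then have "ext_id f u = ext_id f w"
      by (simp add: e)
    then show "u = w"
      using bij_is_inj[OF tAut_bij[OF A]] by (simp add: inj_eq)
  qed
  moreover have "tadj (f u) (f w) \<longleftrightarrow> tadj u w" if "u \<in> tverts" "w \<in> tverts" for u w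
    using tAut_tadj[OF A that] that by (simp add: e)
  moreover have "(\<lambda>a. tcol (f v) (f (tnb v a))) \<in> H" if "v \<in> tverts" for v
    using H[OF that] sigma_ext_id[OF that] by simp
  ultimately show ?thesis
    using root e[OF tverts_Nil] unfolding root_stab_map_def by simp
qed

text \<open>Surjectivity onto the vertices follows from injectivity on the finite levels.\<close>
lemma fixU_if_root_stab_map:
  fixes f :: "'a::finite list \<Rightarrow> 'a list"
  assumes f: "f \<in> PiE tverts tlevel" and Q: "root_stab_map H f"
  shows "ext_id f \<in> fixU H {[]}"
proof -
  have lev: "f v \<in> tlevel v" if "v \<in> tverts" for v
    using f that by auto
  have inj: "inj_on f tverts"
    using Q by (simp add: root_stab_map_def)
  have "tverts \<subseteq> f ` tverts"
  proof
    fix y :: "'a list" assume y: "y \<in> tverts"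
    have "f ` tlevel y \<subseteq> tlevel y"
      using lev by (auto simp: tlevel_def)
    moreover have "inj_on f (tlevel y)"
      using inj by (rule inj_on_subset) (auto simp: tlevel_def)
    ultimately have "f ` tlevel y = tlevel y"
      using endo_inj_surj[OF finite_tlevel] by blast
    moreover have "y \<in> tlevel y" "tlevel y \<subseteq> tverts"
      using y by (auto simp: tlevel_def)
    ultimately show "y \<in> f ` tverts"
      by blast
  qed
  moreover have "f ` tverts \<subseteq> tverts"
    using lev by (auto simp: tlevel_def)
  ultimately have onto: "ext_id f ` tverts = tverts"
    by (simp add: ext_id_def)
  have "ext_id f \<in> tAut"
  proof (rule tAut_intro[OF _ onto])
    show "inj_on (ext_id f) tverts"
      using inj by (simp add: inj_on_def ext_id_def)
    show "ext_id f x = x" if "x \<notin> tverts" for x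
      using that by (simp add: ext_id_def)
    show "tadj (ext_id f u) (ext_id f w) \<longleftrightarrow> tadj u w" if "u \<in> tverts" "w \<in> tverts" for u w
      using Q that by (simp add: ext_id_def root_stab_map_def)
  qed
  moreover have "sigma (ext_id f) v \<in> H" if "v \<in> tverts" for v
    using Q that sigma_ext_id[OF that] by (simp add: root_stab_map_def)
  ultimately show ?thesis
    using Q by (simp add: fixU_def U_def root_stab_map_def ext_id_def)
qed

lemma not_root_stab_map_finite_witness:
  fixes f :: "'a::finite list \<Rightarrow> 'a list"
  assumes "\<not> root_stab_map H f"
  shows "\<exists>D. finite D \<and> D \<subseteq> tverts \<and> (\<forall>f'. (\<forall>d\<in>D. f' d = f d) \<longrightarrow> \<not> root_stab_map H f')"
proof -
  consider "f [] \<noteq> []"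
    | u w where "u \<in> tverts" "w \<in> tverts" "f u = f w" "u \<noteq> w"
    | u w where "u \<in> tverts" "w \<in> tverts" "\<not> (tadj (f u) (f w) \<longleftrightarrow> tadj u w)"
    | v where "v \<in> tverts" "(\<lambda>a. tcol (f v) (f (tnb v a))) \<notin> H"
    using assms unfolding root_stab_map_def inj_on_def by blast
  then show ?thesis
  proof cases
    case 1
    then show ?thesis
      by (intro exI[of _ "{[]}"]) (auto simp: root_stab_map_def)
  next
    case (2 u w)
    then show ?thesis
      by (intro exI[of _ "{u, w}"]) (auto simp: root_stab_map_def inj_on_def)
  next
    case (3 u w)
    have "\<not> root_stab_map H f'" if "\<forall>d\<in>{u, w}. f' d = f d" for f'
    proof -
      have "\<not> (tadj (f' u) (f' w) \<longleftrightarrow> tadj u w)"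
        using 3(3) that by simp
      then show ?thesis
        using 3(1,2) unfolding root_stab_map_def by blast
    qed
    then show ?thesis
      using 3(1,2) by (intro exI[of _ "{u, w}"]) simp
  next
    case (4 v)
    have "\<not> root_stab_map H f'" if "\<forall>d\<in>insert v (range (tnb v)). f' d = f d" for f'
    proof -
      have "(\<lambda>a. tcol (f' v) (f' (tnb v a))) \<notin> H"
        using 4(2) that by simp
      then show ?thesis
        using 4(1) unfolding root_stab_map_def by blast
    qed
    then show ?thesis
      using tnb_star_subset[OF 4(1)] by (intro exI[of _ "insert v (range (tnb v))"]) simp
  qed
qed

abbreviation tlevel_topology :: "('a list \<Rightarrow> 'a list) topology" where
  "tlevel_topology \<equiv> product_topology (\<lambda>v. discrete_topology (tlevel v)) tverts"

lemma openin_tlevel_topology_agree: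
  assumes f: "f \<in> PiE tverts tlevel" and D: "finite D" "D \<subseteq> tverts"
  shows "openin tlevel_topology {f' \<in> PiE tverts tlevel. \<forall>d\<in>D. f' d = f d}"
proof -
  define X where "X i = (if i \<in> D then {f i} else tlevel i)" for i
  have "openin tlevel_topology (PiE tverts X)"
  proof (rule product_topology_basis)
    show "openin (discrete_topology (tlevel i)) (X i)" for i
      using f D(2) by (auto simp: X_def)
    have "{i. X i \<noteq> topspace (discrete_topology (tlevel i))} \<subseteq> D"
      by (auto simp: X_def)
    then show "finite {i. X i \<noteq> topspace (discrete_topology (tlevel i))}"
      using D(1) by (rule finite_subset)
  qed
  moreover have "PiE tverts X = {f' \<in> PiE tverts tlevel. \<forall>d\<in>D. f' d = f d}"
    using f D(2) by (auto simp: PiE_def Pi_def X_def split: if_splits)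
  ultimately show ?thesis
    by simp
qed

lemma closedin_root_stab_maps:
  fixes H :: "('a::finite \<Rightarrow> 'a) set"
  shows "closedin tlevel_topology {f \<in> PiE tverts tlevel. root_stab_map H f}"
proof -
  let ?C = "{f \<in> PiE tverts tlevel. root_stab_map H f}"
  have "\<exists>T. openin tlevel_topology T \<and> f \<in> T \<and> T \<subseteq> PiE tverts tlevel - ?C"
    if f: "f \<in> PiE tverts tlevel" and nQ: "\<not> root_stab_map H f" for f
  proof -
    obtain D where D: "finite D" "D \<subseteq> tverts"
      and bad: "\<And>f'. \<forall>d\<in>D. f' d = f d \<Longrightarrow> \<not> root_stab_map H f'"
      using not_root_stab_map_finite_witness[OF nQ] by blast
    let ?N = "{f' \<in> PiE tverts tlevel. \<forall>d\<in>D. f' d = f d}"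
    have "openin tlevel_topology ?N"
      using f D by (rule openin_tlevel_topology_agree)
    moreover have "f \<in> ?N"
      using f by simp
    moreover have "?N \<subseteq> PiE tverts tlevel - ?C"
      using bad by blast
    ultimately show ?thesis
      by (intro exI[of _ ?N] conjI)
  qed
  then have "openin tlevel_topology (PiE tverts tlevel - ?C)"
    by (subst openin_subopen) blast
  moreover have "topspace tlevel_topology = PiE tverts tlevel"
    by simp
  ultimately show ?thesis
    unfolding closedin_def by (intro conjI) auto
qed

text \<open>Near \<open>ext_id f\<close>, a basic open set \<open>ext_id f \<circ> fixU H S\<close> of \<open>Gtop H H'\<close> pulls back to
  the maps agreeing with \<open>f\<close> on \<open>S\<close>.\<close>
lemma continuous_map_ext_id:
  fixes H H' :: "('a::finite \<Rightarrow> 'a) set"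
  assumes pH: "perm_group H" "perm_group H'" "H \<subseteq> H'"
  shows "continuous_map (subtopology tlevel_topology {f \<in> PiE tverts tlevel. root_stab_map H f})
           (Gtop H H') ext_id"
proof -
  let ?C = "{f \<in> PiE tverts tlevel. root_stab_map H f}"
  have K: "ext_id f \<in> fixU H {[]}" if "f \<in> ?C" for f
    using that fixU_if_root_stab_map by blast
  have "openin (subtopology tlevel_topology ?C) {f \<in> ?C. ext_id f \<in> W}"
    if W: "openin (Gtop H H') W" for W
  proof (subst openin_subopen, intro ballI)
    fix f assume "f \<in> {f \<in> ?C. ext_id f \<in> W}"
    then have f: "f \<in> ?C" and fW: "ext_id f \<in> W"
      by auto
    have gU: "ext_id f \<in> U H"
      using K[OF f] fixU_subset_U by blast
    obtain S where S: "finite S" "S \<subseteq> tverts" "lcoset (ext_id f) (fixU H S) \<subseteq> W"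
      using W fW by (auto simp: openin_Gtop)
    let ?N = "{f' \<in> PiE tverts tlevel. \<forall>d\<in>S. f' d = f d}"
    have "ext_id f' \<in> W" if f': "f' \<in> ?C \<inter> ?N" for f'
    proof -
      let ?k = "inv (ext_id f) \<circ> ext_id f'"
      have "?k \<in> U H"
        using U_comp[OF pH(1) U_inv[OF pH(1) gU]] K f' fixU_subset_U by blast
      moreover have "?k s = s" if "s \<in> S" for s
      proof -
        have "ext_id f' s = ext_id f s"
          using f' that S(2) by (auto simp: ext_id_def)
        then show ?thesis
          using tAut_inv_apply[OF U_tAut[OF gU]] by simp
      qed
      ultimately have "?k \<in> fixU H S"
        by (simp add: fixU_def)
      moreover have "ext_id f \<circ> ?k = ext_id f'"
        using U_tAut[OF gU] by (simp add: o_assoc)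
      ultimately have "ext_id f' \<in> lcoset (ext_id f) (fixU H S)"
        by (intro image_eqI[where x = ?k]) simp_all
      then show ?thesis
        by (rule subsetD[OF S(3)])
    qed
    then show "\<exists>T. openin (subtopology tlevel_topology ?C) T \<and> f \<in> T \<and> T \<subseteq> {f \<in> ?C. ext_id f \<in> W}"
      using openin_subtopology_Int2[OF openin_tlevel_topology_agree[OF _ S(1,2)]] f
      by (intro exI[of _ "?C \<inter> ?N"]) auto
  qed
  moreover have "ext_id ` ?C \<subseteq> topspace (Gtop H H')"
    using K fixU_subset_U U_subset_G2[OF pH(3)] topspace_Gtop[OF pH] by blast
  ultimately show ?thesis
    unfolding continuous_map by auto
qed

lemma compactin_root_stabiliser:
  fixes H H' :: "('a::finite \<Rightarrow> 'a) set"
  assumes pH: "perm_group H" "perm_group H'" "H \<subseteq> H'"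
  shows "compactin (Gtop H H') (fixU H {[]})"
proof -
  let ?C = "{f \<in> PiE tverts tlevel. root_stab_map H f}"
  have "compact_space (tlevel_topology :: ('a list \<Rightarrow> 'a list) topology)"
    by (simp add: compact_space_product_topology compact_space_discrete_topology finite_tlevel)
  then have "compactin tlevel_topology ?C"
    using closedin_root_stab_maps by (rule closedin_compact_space)
  then have "compactin (subtopology tlevel_topology ?C) ?C"
    by (simp add: compactin_subtopology)
  then have "compactin (Gtop H H') (ext_id ` ?C)"
    using continuous_map_ext_id[OF pH] by (rule image_compactin)
  moreover have "ext_id ` ?C = fixU H {[]}"
  proof (intro equalityI subsetI)
    show "k \<in> fixU H {[]}" if "k \<in> ext_id ` ?C" for k
      using that fixU_if_root_stab_map by blast
    fix k assume k: "k \<in> fixU H {[]}"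
    then have kA: "k \<in> tAut" and k0: "k [] = []"
      using fixU_subset_U U_tAut by (auto simp: fixU_def)
    have "restrict k tverts \<in> PiE tverts tlevel"
      using tAut_in_tverts[OF kA] tAut_fixing_root_length[OF kA k0] by (simp add: tlevel_def)
    moreover have "ext_id (restrict k tverts) = k"
      using tAut_outside[OF kA] by (auto simp: ext_id_def)
    moreover have "root_stab_map H (restrict k tverts)"
      using root_stab_map_if_fixU[of "restrict k tverts" H] k calculation(2) by simp
    ultimately show "k \<in> ext_id ` ?C"
      by (intro image_eqI[where x = "restrict k tverts"]) simp_all
  qed
  ultimately show ?thesis
    by simp
qed

theorem mainTheorem10:
  fixes F F' H H' :: "('a::finite \<Rightarrow> 'a) set"
  assumes "CARD('a) \<ge> 3"
    and "perm_group F" "perm_group F'" "perm_group H" "perm_group H'"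
    and "F \<subseteq> F'" "F' \<subseteq> hat F" "H \<subseteq> H'" "H' \<subseteq> hat H"
    and "F \<subseteq> H" "F' \<subseteq> H'"
    and "H \<inter> F' = F" "H' = setprod H F'"
  shows "is_subgroup (G2 F F') (G2 H H')
         \<and> closedin (Gtop H H') (G2 F F')
         \<and> cocompact (Gtop H H') (G2 F F')
         \<and> (acts_freely F \<longrightarrow> cocompact_lattice (Gtop H H') (G2 F F'))"
proof -
  note pF = assms(2,3) and pH = assms(4,5,8) and sub = assms(10,11,12)
  have "cocompact (Gtop H H') (G2 F F')"
    unfolding cocompact_def topspace_Gtop[OF pH]
    using compactin_root_stabiliser[OF pH]
      G2_eq_root_stabiliser_times_G2[OF pF assms(4,5,6,7,10,11,8,13)] by blast
  moreover have "acts_freely F \<Longrightarrow> discrete_in (Gtop H H') (G2 F F')"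
    using discrete_in_G2[OF pH pF sub] .
  ultimately show ?thesis
    using is_subgroup_G2[OF pF assms(10,11)] closedin_G2[OF pH sub]
    unfolding cocompact_lattice_def by blast
qed

end
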